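(* Let $C>0$ and suppose the event holds that $\sum_{t=\tau_1}^{\tau_2}\mathbb E_t[M_t(g,a)]\le2\sum_{t=\tau_1}^{\tau_2}M_t(g,a)+C$ for all $g\in\mathcal G$, $a\in\mathcal A$ and $1\le\tau_1\le\tau_2\le T$. Assume $g^\star_a\in\mathcal G$ for all $a$. Then for all $a\in\mathcal A$ and $2\le k\le m\le M$: (1) $g^\star_a\in\hat{\mathcal G}_m\big(\frac{C}{2(\tau_m-1)},a\big)$; (2) for all $\beta\ge0$, $\hat{\mathcal G}_m(\beta,a)\subseteq\tilde{\mathcal G}_m\big(2\beta+\frac{C}{\tau_m-1},a\big)$; (3) for all $\beta\ge0$, $\hat{\mathcal G}_m(\beta,a)\subseteq\hat{\mathcal G}_k\big(\frac{\tau_m-1}{\tau_k-1}\beta+\frac{C}{\tau_k-1},a\big)$; (4) with $\beta_m=\frac{(M-m+1)C}{\tau_m-1}$ and $\mathcal F_m=\prod_{a}\hat{\mathcal G}_m(\beta_m,a)$ for $m\ge2$, $\mathcal F_1=\mathcal G^{\mathcal A}$: $f^\star\in\mathcal F_m$ for all $m$, and $\mathcal F_m\subseteq\mathcal F_{m-1}\subseteq\dots\subseteq\mathcal F_1$.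
   Context: Setting: $\mathcal A=\{1,\dots,K\}$, $D$ a distribution over $(x,r)\in\mathcal X\times[0,1]^K$; in rounds $t=1,\dots,T$, $(x_t,r_t)\sim D$ independently of the past, $a_t$ is chosen from $x_t$, past observations and independent randomness. $\mathcal G$ is a class of functions $\mathcal X\to[0,1]$, $g^\star_a(x)=\mathbb E[r(a)\mid x]$, $f^\star(x,a)=g^\star_a(x)$. $\mathcal J_t=\sigma((x_s,a_s,r_s)_{s<t})$, $\mathbb E_t=\mathbb E[\cdot\mid\mathcal J_t]$; $M_t(g,a)=\big((g(x_t)-r_t(a))^2-(g^\star_a(x_t)-r_t(a))^2\big)\mathbf 1\{a=a_t\}$. Epochs: $\tau_m=2^{m-1}$; $M$ is the index of the epoch (rounds $\tau_m,\dots,\tau_{m+1}-1$) containing $T$. For $m\ge2$: $\hat{\mathcal R}_m(g,a)=\frac1{\tau_m-1}\sum_{s<\tau_m}(g(x_s)-r_s(a_s))^2\mathbf 1\{a_s=a\}$, $\hat{\mathcal G}_m(\beta,a)=\{g\in\mathcal G:\hat{\mathcal R}_m(g,a)-\min_{g'\in\mathcal G}\hat{\mathcal R}_m(g',a)\le\beta\}$ (minimum assumed attained), and $\tilde{\mathcal G}_m(\beta,a)=\{g\in\mathcal G:\frac1{\tau_m-1}\sum_{t=1}^{\tau_m-1}\mathbb E_t[M_t(g,a)]\le\beta\}$. *)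

theory Defs
  imports "HOL-Probability.Probability"
begin

(* A sample path is  \<omega> :: nat \<Rightarrow> 'x \<times> (nat \<Rightarrow> real) \<times> 'u,
   \<omega> t = (x_t, r_t, \<xi>_t): context, full reward vector (actions 1..K) and the
   learner's independent internal randomness of round t.
   A learner is a policy  \<pi> t h x u  choosing the action of round t from the
   history h of past observations (x_s, a_s, r_s(a_s)), s < t, the context and
   the internal randomness. *)

type_synonym ('x,'u) path = "nat \<Rightarrow> 'x \<times> (nat \<Rightarrow> real) \<times> 'u"
type_synonym ('x,'u) policy = "nat \<Rightarrow> ('x \<times> nat \<times> real) list \<Rightarrow> 'x \<Rightarrow> 'u \<Rightarrow> nat"

definition ctx :: "('x,'u) path \<Rightarrow> nat \<Rightarrow> 'x" where
  "ctx \<omega> t = fst (\<omega> t)"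

definition rew :: "('x,'u) path \<Rightarrow> nat \<Rightarrow> nat \<Rightarrow> real" where
  "rew \<omega> t = fst (snd (\<omega> t))"

definition rnd :: "('x,'u) path \<Rightarrow> nat \<Rightarrow> 'u" where
  "rnd \<omega> t = snd (snd (\<omega> t))"

(* hist \<pi> \<omega> t = observations of rounds 1, ..., t-1 *)
fun hist :: "('x,'u) policy \<Rightarrow> ('x,'u) path \<Rightarrow> nat \<Rightarrow> ('x \<times> nat \<times> real) list" where
  "hist \<pi> \<omega> 0 = []"
| "hist \<pi> \<omega> (Suc t) =
     (if t = 0 then []
      else (let a = \<pi> t (hist \<pi> \<omega> t) (ctx \<omega> t) (rnd \<omega> t)
            in hist \<pi> \<omega> t @ [(ctx \<omega> t, a, rew \<omega> t a)]))"

definition act :: "('x,'u) policy \<Rightarrow> ('x,'u) path \<Rightarrow> nat \<Rightarrow> nat" where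
  "act \<pi> \<omega> t = \<pi> t (hist \<pi> \<omega> t) (ctx \<omega> t) (rnd \<omega> t)"

definition Mloss :: "(nat \<Rightarrow> 'x \<Rightarrow> real) \<Rightarrow> ('x \<Rightarrow> real) \<Rightarrow> nat \<Rightarrow> 'x \<Rightarrow> (nat \<Rightarrow> real) \<Rightarrow> nat \<Rightarrow> real" where
  "Mloss gs g a x r b = ((g x - r a)\<^sup>2 - (gs a x - r a)\<^sup>2) * (if a = b then 1 else 0)"

definition Mt :: "(nat \<Rightarrow> 'x \<Rightarrow> real) \<Rightarrow> ('x,'u) policy \<Rightarrow> ('x,'u) path \<Rightarrow> nat \<Rightarrow> ('x \<Rightarrow> real) \<Rightarrow> nat \<Rightarrow> real" where
  "Mt gs \<pi> \<omega> t g a = Mloss gs g a (ctx \<omega> t) (rew \<omega> t) (act \<pi> \<omega> t)"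

(* E_t[M_t(g,a)]: (regular) conditional expectation given J_t, i.e. integration over
   the fresh round-t randomness (x_t, r_t) ~ D and \<xi>_t ~ U, which are independent
   of the past, with the past observations (hence the history) held fixed. *)
definition EMt :: "('x \<times> (nat \<Rightarrow> real)) measure \<Rightarrow> 'u measure \<Rightarrow> (nat \<Rightarrow> 'x \<Rightarrow> real) \<Rightarrow>
    ('x,'u) policy \<Rightarrow> ('x,'u) path \<Rightarrow> nat \<Rightarrow> ('x \<Rightarrow> real) \<Rightarrow> nat \<Rightarrow> real" where
  "EMt D U gs \<pi> \<omega> t g a =
     (\<integral>z. Mloss gs g a (fst (fst z)) (snd (fst z)) (\<pi> t (hist \<pi> \<omega> t) (fst (fst z)) (snd z)) \<partial>(D \<Otimes>\<^sub>M U))"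

definition tau :: "nat \<Rightarrow> nat" where
  "tau m = 2 ^ (m - 1)"

definition Rhat :: "('x,'u) policy \<Rightarrow> ('x,'u) path \<Rightarrow> nat \<Rightarrow> ('x \<Rightarrow> real) \<Rightarrow> nat \<Rightarrow> real" where
  "Rhat \<pi> \<omega> m g a =
     (1 / (real (tau m) - 1)) *
     (\<Sum>s\<in>{1..<tau m}. (g (ctx \<omega> s) - rew \<omega> s (act \<pi> \<omega> s))\<^sup>2 *
                          (if act \<pi> \<omega> s = a then 1 else 0))"

(* \<hat>G_m(\<beta>,a); the minimum over G is written as an infimum (it is assumed attained) *)
definition Ghat :: "('x \<Rightarrow> real) set \<Rightarrow> ('x,'u) policy \<Rightarrow> ('x,'u) path \<Rightarrow> nat \<Rightarrow> real \<Rightarrow> nat \<Rightarrow> ('x \<Rightarrow> real) set" where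
  "Ghat G \<pi> \<omega> m \<beta> a =
     {g \<in> G. Rhat \<pi> \<omega> m g a - (INF g'\<in>G. Rhat \<pi> \<omega> m g' a) \<le> \<beta>}"

definition Gtilde :: "('x \<times> (nat \<Rightarrow> real)) measure \<Rightarrow> 'u measure \<Rightarrow> (nat \<Rightarrow> 'x \<Rightarrow> real) \<Rightarrow>
    ('x \<Rightarrow> real) set \<Rightarrow> ('x,'u) policy \<Rightarrow> ('x,'u) path \<Rightarrow> nat \<Rightarrow> real \<Rightarrow> nat \<Rightarrow> ('x \<Rightarrow> real) set" where
  "Gtilde D U gs G \<pi> \<omega> m \<beta> a =
     {g \<in> G. (1 / (real (tau m) - 1)) * (\<Sum>t\<in>{1..tau m - 1}. EMt D U gs \<pi> \<omega> t g a) \<le> \<beta>}"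

definition betam :: "nat \<Rightarrow> real \<Rightarrow> nat \<Rightarrow> real" where
  "betam M C m = real (M - m + 1) * C / (real (tau m) - 1)"

definition Fm :: "nat \<Rightarrow> real \<Rightarrow> ('x \<Rightarrow> real) set \<Rightarrow> ('x,'u) policy \<Rightarrow> ('x,'u) path \<Rightarrow> nat \<Rightarrow> nat \<Rightarrow> (nat \<Rightarrow> 'x \<Rightarrow> real) set" where
  "Fm K C G \<pi> \<omega> M m =
     (if m \<le> 1 then (\<Pi> a\<in>{1..K}. G)
      else (\<Pi> a\<in>{1..K}. Ghat G \<pi> \<omega> m (betam M C m) a))"

end

theory Submission
  imports Defs
begin

text \<open>The conditional excess loss \<open>E\<^sub>t[M\<^sub>t(g,a)]\<close> is nonnegative: conditionally on \<open>x\<^sub>t\<close> the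
  cross term of \<open>(g - r)\<^sup>2 - (g\<^sup>\<star> - r)\<^sup>2\<close> has mean zero, leaving \<open>E[(g - g\<^sup>\<star>)\<^sup>2 1{a\<^sub>t = a}]\<close>.
  Hence the event bounds every partial sum of the \<open>M\<^sub>t(g,a)\<close> from below by \<open>-C/2\<close>. The empirical
  risk difference \<open>R\<^sub>m(g) - R\<^sub>m(g\<^sup>\<star>)\<close> is such a partial sum divided by \<open>\<tau>\<^sub>m - 1\<close>; so \<open>g\<^sup>\<star>\<close> is
  nearly an empirical risk minimiser, and near-optimality at epoch \<open>m\<close> transfers to the
  conditional risk and, splitting the sum at \<open>\<tau>\<^sub>k\<close>, to every earlier epoch \<open>k\<close>. With
  \<open>\<beta>\<^sub>m = (M - m + 1) C / (\<tau>\<^sub>m - 1)\<close> the transfer from \<open>m\<close> to \<open>m - 1\<close> gives exactly \<open>\<beta>\<^sub>m\<^sub>-\<^sub>1\<close>.\<close>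

lemma abs_diff_squares_le_1:
  fixes u v w :: real
  assumes "u \<in> {0..1}" "v \<in> {0..1}" "w \<in> {0..1}"
  shows "\<bar>(u - w)\<^sup>2 - (v - w)\<^sup>2\<bar> \<le> 1"
proof -
  have "(u - w)\<^sup>2 \<le> 1" "(v - w)\<^sup>2 \<le> 1"
    using assms by (auto simp: abs_square_le_1 abs_le_iff)
  then show ?thesis by (simp add: abs_le_iff) (smt (verit) zero_le_power2)
qed

lemma abs_Mloss_le_1:
  assumes "g x \<in> {0..1}" "gs a x \<in> {0..1}" "r a \<in> {0..1}"
  shows "\<bar>Mloss gs g a x r b\<bar> \<le> 1"
  using abs_diff_squares_le_1[OF assms] by (auto simp: Mloss_def)

lemma emeasure_distr_density_fst:
  fixes D :: "('x \<times> 'y) measure" and h :: "'x \<times> 'y \<Rightarrow> real"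
  assumes "prob_space D" and [measurable]: "fst \<in> measurable D X" "h \<in> borel_measurable D" "A \<in> sets X"
    and h: "AE z in D. h z \<in> {0..1}"
  shows "emeasure (distr (density D (\<lambda>z. ennreal (h z))) X fst) A
    = ennreal (\<integral>z. indicator A (fst z) * h z \<partial>D)"
proof -
  interpret prob_space D by fact
  have "integrable D (\<lambda>z. indicator A (fst z) * h z)"
    by (rule integrable_const_bound[where B=1]) (use h in \<open>auto simp: indicator_def\<close>)
  moreover have "emeasure (distr (density D (\<lambda>z. ennreal (h z))) X fst) A
      = (\<integral>\<^sup>+z. ennreal (indicator A (fst z) * h z) \<partial>D)"
    by (simp add: emeasure_distr emeasure_density measurable_sets)
       (auto intro!: nn_integral_cong simp: indicator_def)
  moreover have "AE z in D. 0 \<le> indicator A (fst z) * h z"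
    using h by eventually_elim simp
  ultimately show ?thesis
    by (simp add: nn_integral_eq_integral)
qed

lemma cond_mean_residual_orthogonal:
  fixes D :: "('x \<times> 'y) measure" and r :: "'x \<times> 'y \<Rightarrow> real"
  assumes D: "prob_space D" "sets D = sets (X \<Otimes>\<^sub>M Y)"
    and r: "r \<in> borel_measurable D" "AE z in D. r z \<in> {0..1}"
    and f: "f \<in> borel_measurable X" "\<forall>x\<in>space X. f x \<in> {0..1}"
    and cond: "\<And>A. A \<in> sets X \<Longrightarrow>
        (\<integral>z. indicator A (fst z) * r z \<partial>D) = (\<integral>z. indicator A (fst z) * f (fst z) \<partial>D)"
    and \<psi>: "\<psi> \<in> borel_measurable X" "\<forall>x\<in>space X. \<bar>\<psi> x\<bar> \<le> B"
  shows "(\<integral>z. \<psi> (fst z) * (f (fst z) - r z) \<partial>D) = 0"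
proof -
  interpret prob_space D by fact
  have [measurable]: "fst \<in> measurable D X"
    using measurable_cong_sets[OF D(2) refl] measurable_fst by blast
  have fst_space: "z \<in> space D \<Longrightarrow> fst z \<in> space X" for z
    using sets_eq_imp_space_eq[OF D(2)] by (auto simp: space_pair_measure)
  note [measurable] = r(1) f(1) \<psi>(1)
  have bounded_mult: "\<bar>c * d\<bar> \<le> B" if "\<bar>c\<bar> \<le> B" "d \<in> {0..1}" for c d :: real
    using that mult_left_le[of d "\<bar>c\<bar>"] by (simp add: abs_mult)
  txt \<open>Assumption cond says that the push-forwards of \<open>r\<cdot>D\<close> and \<open>(f \<circ> fst)\<cdot>D\<close> along \<open>fst\<close>
    agree; integrating \<open>\<psi>\<close> against both gives the claim.\<close>
  define N\<^sub>r where "N\<^sub>r = distr (density D (\<lambda>z. ennreal (r z))) X fst"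
  define N\<^sub>f where "N\<^sub>f = distr (density D (\<lambda>z. ennreal (f (fst z)))) X fst"
  have "N\<^sub>r = N\<^sub>f"
  proof (rule measure_eqI)
    show "sets N\<^sub>r = sets N\<^sub>f" by (simp add: N\<^sub>r_def N\<^sub>f_def)
    fix A assume "A \<in> sets N\<^sub>r"
    then have A: "A \<in> sets X" by (simp add: N\<^sub>r_def)
    have "AE z in D. f (fst z) \<in> {0..1}" using f(2) fst_space by (auto intro!: AE_I2)
    then show "emeasure N\<^sub>r A = emeasure N\<^sub>f A"
      unfolding N\<^sub>r_def N\<^sub>f_def using emeasure_distr_density_fst[OF D(1) _ _ A] r(2) cond[OF A]
      by simp
  qed
  have "integral\<^sup>L N\<^sub>r \<psi> = (\<integral>z. \<psi> (fst z) * r z \<partial>D)"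
    unfolding N\<^sub>r_def using r(2)
    by (subst integral_distr) (auto simp: integral_density mult.commute)
  moreover have "integral\<^sup>L N\<^sub>f \<psi> = (\<integral>z. \<psi> (fst z) * f (fst z) \<partial>D)"
    unfolding N\<^sub>f_def using f(2) fst_space
    by (subst integral_distr) (auto simp: integral_density mult.commute)
  moreover have "integrable D (\<lambda>z. \<psi> (fst z) * f (fst z))"
    by (rule integrable_const_bound[where B=B])
       (use f(2) \<psi>(2) fst_space in \<open>auto intro!: bounded_mult AE_I2\<close>)
  moreover have "integrable D (\<lambda>z. \<psi> (fst z) * r z)"
  proof (rule integrable_const_bound[where B=B])
    show "AE z in D. norm (\<psi> (fst z) * r z) \<le> B"
      using r(2) AE_space by eventually_elim (use \<psi>(2) fst_space in \<open>auto intro!: bounded_mult\<close>)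
  qed measurable
  ultimately show ?thesis
    using \<open>N\<^sub>r = N\<^sub>f\<close> by (simp add: right_diff_distrib)
qed

lemma integral_Mloss_nonneg:
  fixes D :: "('x \<times> (nat \<Rightarrow> real)) measure"
  assumes D: "prob_space D" "sets D = sets (X \<Otimes>\<^sub>M (\<Pi>\<^sub>M i\<in>UNIV. borel))"
    and rew: "AE z in D. snd z a \<in> {0..1}"
    and g: "g \<in> borel_measurable X" "\<forall>x\<in>space X. g x \<in> {0..1}"
    and gs: "gs a \<in> borel_measurable X" "\<forall>x\<in>space X. gs a x \<in> {0..1}"
    and cond: "\<And>A. A \<in> sets X \<Longrightarrow>
        (\<integral>z. indicator A (fst z) * snd z a \<partial>D) = (\<integral>z. indicator A (fst z) * gs a (fst z) \<partial>D)"
    and b: "b \<in> measurable X (count_space UNIV)"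
  shows "0 \<le> (\<integral>w. Mloss gs g a (fst w) (snd w) (b (fst w)) \<partial>D)"
proof -
  interpret prob_space D by fact
  have [measurable]: "fst \<in> measurable D X"
    using measurable_cong_sets[OF D(2) refl] measurable_fst by blast
  have "(\<lambda>w. snd w a) \<in> borel_measurable (X \<Otimes>\<^sub>M (\<Pi>\<^sub>M i\<in>UNIV. (borel :: real measure)))"
    by measurable
  then have [measurable]: "(\<lambda>w. snd w a) \<in> borel_measurable D"
    using measurable_cong_sets[OF D(2) refl] by blast
  have fst_space: "w \<in> space D \<Longrightarrow> fst w \<in> space X" for w
    using sets_eq_imp_space_eq[OF D(2)] by (auto simp: space_pair_measure)
  note [measurable] = g(1) gs(1) b
  define h where "h x = (if b x = a then 1 else 0 :: real)" for x
  define \<psi> where "\<psi> x = (g x - gs a x) * h x" for x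
  have [measurable]: "h \<in> borel_measurable X" unfolding h_def by measurable
  have [measurable]: "\<psi> \<in> borel_measurable X" unfolding \<psi>_def by measurable
  have diff_le_1: "\<bar>g x - gs a x\<bar> \<le> 1" if "x \<in> space X" for x
    using g(2)[rule_format, OF that] gs(2)[rule_format, OF that] by (auto simp: abs_le_iff)
  have \<psi>_le_1: "\<bar>\<psi> x\<bar> \<le> 1" if "x \<in> space X" for x
    using diff_le_1[OF that] by (simp add: \<psi>_def h_def abs_mult)
  txt \<open>Bias-variance split around the conditional mean \<open>g\<^sup>\<star>\<close>.\<close>
  have split: "Mloss gs g a (fst w) (snd w) (b (fst w))
      = (g (fst w) - gs a (fst w))\<^sup>2 * h (fst w) + 2 * (\<psi> (fst w) * (gs a (fst w) - snd w a))" for w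
    unfolding Mloss_def \<psi>_def h_def by (auto simp: power2_eq_square algebra_simps)
  have "integrable D (\<lambda>w. (g (fst w) - gs a (fst w))\<^sup>2 * h (fst w))"
    by (rule integrable_const_bound[where B=1])
       (use diff_le_1 fst_space in \<open>auto intro!: AE_I2 simp: h_def abs_square_le_1\<close>)
  moreover have "integrable D (\<lambda>w. \<psi> (fst w) * (gs a (fst w) - snd w a))"
  proof (rule integrable_const_bound[where B=1])
    have residual_le_1: "\<bar>gs a x - y\<bar> \<le> 1" if "x \<in> space X" "y \<in> {0..1}" for x y
      using gs(2) that by (auto simp: abs_le_iff)
    show "AE w in D. norm (\<psi> (fst w) * (gs a (fst w) - snd w a)) \<le> 1"
      using rew AE_space
      by eventually_elim (use \<psi>_le_1 residual_le_1 fst_space in \<open>auto simp: abs_mult intro!: mult_le_one\<close>)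
  qed measurable
  moreover have "(\<integral>w. \<psi> (fst w) * (gs a (fst w) - snd w a) \<partial>D) = 0"
    by (rule cond_mean_residual_orthogonal[OF D _ _ gs cond, where \<psi>=\<psi> and B=1])
       (use rew \<psi>_le_1 in auto)
  ultimately have "(\<integral>w. Mloss gs g a (fst w) (snd w) (b (fst w)) \<partial>D)
      = (\<integral>w. (g (fst w) - gs a (fst w))\<^sup>2 * h (fst w) \<partial>D)"
    unfolding split by simp
  also have "\<dots> \<ge> 0" by (auto intro!: integral_nonneg simp: h_def)
  finally show ?thesis .
qed

lemma EMt_nonneg:
  fixes D :: "('x \<times> (nat \<Rightarrow> real)) measure" and U :: "'u measure"
  assumes D: "prob_space D" "sets D = sets (X \<Otimes>\<^sub>M (\<Pi>\<^sub>M i\<in>UNIV. borel))"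
    and rew: "AE z in D. snd z a \<in> {0..1}"
    and U: "prob_space U"
    and g: "g \<in> borel_measurable X" "\<forall>x\<in>space X. g x \<in> {0..1}"
    and gs: "gs a \<in> borel_measurable X" "\<forall>x\<in>space X. gs a x \<in> {0..1}"
    and cond: "\<And>A. A \<in> sets X \<Longrightarrow>
        (\<integral>z. indicator A (fst z) * snd z a \<partial>D) = (\<integral>z. indicator A (fst z) * gs a (fst z) \<partial>D)"
    and \<pi>: "(\<lambda>(x, u). \<pi> t (hist \<pi> \<omega> t) x u) \<in> measurable (X \<Otimes>\<^sub>M U) (count_space UNIV)"
  shows "0 \<le> EMt D U gs \<pi> \<omega> t g a"
proof -
  interpret pair_prob_space D U
    using D(1) U by (simp add: pair_prob_space.intro pair_sigma_finite_def prob_space_imp_sigma_finite)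
  define b where "b x u = \<pi> t (hist \<pi> \<omega> t) x u" for x u
  define \<Phi> where "\<Phi> w u = Mloss gs g a (fst w) (snd w) (b (fst w) u)" for w u
  have [measurable]: "fst \<in> measurable D X"
    using measurable_cong_sets[OF D(2) refl] measurable_fst by blast
  have "(\<lambda>w. snd w a) \<in> borel_measurable (X \<Otimes>\<^sub>M (\<Pi>\<^sub>M i\<in>UNIV. (borel :: real measure)))"
    by measurable
  then have [measurable]: "(\<lambda>w. snd w a) \<in> borel_measurable D"
    using measurable_cong_sets[OF D(2) refl] by blast
  have fst_space: "w \<in> space D \<Longrightarrow> fst w \<in> space X" for w
    using sets_eq_imp_space_eq[OF D(2)] by (auto simp: space_pair_measure)
  note [measurable] = g(1) gs(1)
  have "(\<lambda>z. (fst (fst z), snd z)) \<in> measurable (D \<Otimes>\<^sub>M U) (X \<Otimes>\<^sub>M U)" by measurable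
  from measurable_compose[OF this \<pi>]
  have [measurable]: "(\<lambda>z. b (fst (fst z)) (snd z)) \<in> measurable (D \<Otimes>\<^sub>M U) (count_space UNIV)"
    by (simp add: b_def)
  have "AE z in D \<Otimes>\<^sub>M U. snd (fst z) a \<in> {0..1}"
    by (rule AE_distrD[OF measurable_fst]) (subst M2.distr_pair_fst, rule rew)
  then have "AE z in D \<Otimes>\<^sub>M U. norm (case_prod \<Phi> z) \<le> 1"
    using AE_space
  proof eventually_elim
    case (elim z)
    then have "fst (fst z) \<in> space X" using fst_space by (auto simp: space_pair_measure)
    then show ?case
      using elim g(2) gs(2) by (auto intro!: abs_Mloss_le_1 simp: \<Phi>_def split_beta')
  qed
  then have "integrable (D \<Otimes>\<^sub>M U) (case_prod \<Phi>)"
    by (rule integrable_const_bound) (unfold \<Phi>_def Mloss_def split_beta', measurable)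
  from integral_snd[OF this]
  have "EMt D U gs \<pi> \<omega> t g a = (\<integral>u. (\<integral>w. \<Phi> w u \<partial>D) \<partial>U)"
    unfolding EMt_def \<Phi>_def b_def by (simp add: split_beta')
  also have "\<dots> \<ge> 0"
  proof (rule Bochner_Integration.integral_nonneg)
    fix u assume "u \<in> space U"
    then have "(\<lambda>x. (x, u)) \<in> measurable X (X \<Otimes>\<^sub>M U)" by measurable
    from measurable_compose[OF this \<pi>]
    have "(\<lambda>x. b x u) \<in> measurable X (count_space UNIV)" by (simp add: b_def)
    from integral_Mloss_nonneg[where gs=gs and a=a and b="\<lambda>x. b x u", OF D rew g gs cond this]
    show "0 \<le> (\<integral>w. \<Phi> w u \<partial>D)" by (simp add: \<Phi>_def)
  qed
  finally show ?thesis .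
qed

lemma tau_ge_1: "1 \<le> tau m"
  unfolding tau_def by simp

lemma tau_mono: "k \<le> m \<Longrightarrow> tau k \<le> tau m"
  unfolding tau_def by (rule power_increasing) auto

lemma tau_gt_1: "2 \<le> m \<Longrightarrow> 1 < real (tau m)"
  unfolding tau_def using power_increasing[of 1 "m - 1" "2::nat"] by simp

lemma Rhat_diff_gs:
  "Rhat \<pi> \<omega> m g a - Rhat \<pi> \<omega> m (gs a) a =
     (\<Sum>s\<in>{1..<tau m}. Mt gs \<pi> \<omega> s g a) / (real (tau m) - 1)"
proof -
  have "(\<Sum>s\<in>{1..<tau m}. (g (ctx \<omega> s) - rew \<omega> s (act \<pi> \<omega> s))\<^sup>2 * (if act \<pi> \<omega> s = a then 1 else 0))
      - (\<Sum>s\<in>{1..<tau m}. (gs a (ctx \<omega> s) - rew \<omega> s (act \<pi> \<omega> s))\<^sup>2 * (if act \<pi> \<omega> s = a then 1 else 0))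
      = (\<Sum>s\<in>{1..<tau m}. Mt gs \<pi> \<omega> s g a)"
    unfolding sum_subtractf[symmetric] by (rule sum.cong) (auto simp: Mt_def Mloss_def)
  then show ?thesis
    unfolding Rhat_def by (simp add: diff_divide_distrib[symmetric])
qed

lemma Ghat_mono: "\<beta> \<le> \<beta>' \<Longrightarrow> Ghat G \<pi> \<omega> m \<beta> a \<subseteq> Ghat G \<pi> \<omega> m \<beta>' a"
  unfolding Ghat_def by auto

lemma betam_pred:
  assumes "3 \<le> m" "m \<le> M"
  shows "(real (tau m) - 1) / (real (tau (m - 1)) - 1) * betam M C m + C / (real (tau (m - 1)) - 1)
    = betam M C (m - 1)"
proof -
  have scale: "p / q * (n * C / p) + C / q = (n + 1) * C / q" if "p \<noteq> 0" for p q n :: real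
    using that by (simp add: add_divide_distrib algebra_simps)
  have n: "real (M - (m - 1) + 1) = real (M - m + 1) + 1" using assms by auto
  show ?thesis
    unfolding betam_def n by (intro scale) (use tau_gt_1[of m] assms in auto)
qed

locale confidence_sets =
  fixes G :: "('x \<Rightarrow> real) set" and gs :: "nat \<Rightarrow> 'x \<Rightarrow> real"
    and \<pi> :: "('x,'u) policy" and \<omega> :: "('x,'u) path" and K M :: nat and C :: real
  assumes C_nonneg: "0 \<le> C"
    and gs_in: "a \<in> {1..K} \<Longrightarrow> gs a \<in> G"
    and Rhat_min_attained: "2 \<le> m \<Longrightarrow> m \<le> M \<Longrightarrow> a \<in> {1..K} \<Longrightarrow>
        \<exists>g0\<in>G. \<forall>g\<in>G. Rhat \<pi> \<omega> m g0 a \<le> Rhat \<pi> \<omega> m g a"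
    and sum_Mt_lower: "g \<in> G \<Longrightarrow> a \<in> {1..K} \<Longrightarrow> 1 \<le> t1 \<Longrightarrow> t1 \<le> t2 \<Longrightarrow> t2 < tau M \<Longrightarrow>
        - C / 2 \<le> (\<Sum>t\<in>{t1..t2}. Mt gs \<pi> \<omega> t g a)"
begin

lemma sum_Mt_lower_atLeastLessThan:
  assumes "g \<in> G" "a \<in> {1..K}" "1 \<le> t1" "t1 \<le> t2" "t2 \<le> tau M"
  shows "- C / 2 \<le> (\<Sum>t\<in>{t1..<t2}. Mt gs \<pi> \<omega> t g a)"
proof (cases "t1 < t2")
  case True
  then have "{t1..<t2} = {t1..t2 - 1}" by auto
  then show ?thesis using sum_Mt_lower[of g a t1 "t2 - 1"] assms True by simp
qed (use C_nonneg in simp)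

lemma Rhat_minimizer:
  assumes "2 \<le> m" "m \<le> M" "a \<in> {1..K}"
  obtains g0 where "g0 \<in> G" "(INF g\<in>G. Rhat \<pi> \<omega> m g a) = Rhat \<pi> \<omega> m g0 a"
    "Rhat \<pi> \<omega> m g0 a \<le> Rhat \<pi> \<omega> m (gs a) a"
proof -
  obtain g0 where "g0 \<in> G" "\<forall>g\<in>G. Rhat \<pi> \<omega> m g0 a \<le> Rhat \<pi> \<omega> m g a"
    using Rhat_min_attained[OF assms] by blast
  moreover from this have "(INF g\<in>G. Rhat \<pi> \<omega> m g a) = Rhat \<pi> \<omega> m g0 a"
    by (intro cInf_eq_minimum) auto
  ultimately show ?thesis using that gs_in[OF assms(3)] by blast
qed

lemma sum_Mt_prefix_lower:
  assumes "g \<in> G" "a \<in> {1..K}" "m \<le> M"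
  shows "- C / 2 \<le> (\<Sum>s\<in>{1..<tau m}. Mt gs \<pi> \<omega> s g a)"
  using sum_Mt_lower_atLeastLessThan[OF assms(1,2)] tau_ge_1[of m] tau_mono[OF assms(3)] by simp

lemma gs_in_Ghat:
  assumes "2 \<le> m" "m \<le> M" "a \<in> {1..K}"
  shows "gs a \<in> Ghat G \<pi> \<omega> m (C / (2 * (real (tau m) - 1))) a"
proof -
  obtain g0 where g0: "g0 \<in> G" "(INF g\<in>G. Rhat \<pi> \<omega> m g a) = Rhat \<pi> \<omega> m g0 a"
    using Rhat_minimizer[OF assms] .
  have "Rhat \<pi> \<omega> m (gs a) a - Rhat \<pi> \<omega> m g0 a = - (\<Sum>s\<in>{1..<tau m}. Mt gs \<pi> \<omega> s g0 a) / (real (tau m) - 1)"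
    using Rhat_diff_gs[of \<pi> \<omega> m g0 a gs] by simp
  also have "\<dots> \<le> (C / 2) / (real (tau m) - 1)"
    using sum_Mt_prefix_lower[OF g0(1) assms(3,2)] tau_gt_1[OF assms(1)]
    by (intro divide_right_mono) auto
  finally show ?thesis
    using gs_in[OF assms(3)] g0(2) unfolding Ghat_def by simp
qed

lemma sum_Mt_le_if_in_Ghat:
  assumes "2 \<le> m" "m \<le> M" "a \<in> {1..K}" "g \<in> Ghat G \<pi> \<omega> m \<beta> a"
  shows "(\<Sum>s\<in>{1..<tau m}. Mt gs \<pi> \<omega> s g a) \<le> \<beta> * (real (tau m) - 1)"
proof -
  obtain g0 where "(INF g\<in>G. Rhat \<pi> \<omega> m g a) = Rhat \<pi> \<omega> m g0 a"
    "Rhat \<pi> \<omega> m g0 a \<le> Rhat \<pi> \<omega> m (gs a) a"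
    using Rhat_minimizer[OF assms(1-3)] .
  then have "Rhat \<pi> \<omega> m g a - Rhat \<pi> \<omega> m (gs a) a \<le> \<beta>"
    using assms(4) unfolding Ghat_def by simp
  then show ?thesis
    using Rhat_diff_gs[of \<pi> \<omega> m g a gs] tau_gt_1[OF assms(1)] by (simp add: divide_le_eq)
qed

lemma Ghat_subset_Gtilde:
  assumes "2 \<le> m" "m \<le> M" "a \<in> {1..K}"
    and event: "\<And>g. g \<in> G \<Longrightarrow>
      (\<Sum>t\<in>{1..tau m - 1}. EMt D U gs \<pi> \<omega> t g a) \<le> 2 * (\<Sum>t\<in>{1..tau m - 1}. Mt gs \<pi> \<omega> t g a) + C"
  shows "Ghat G \<pi> \<omega> m \<beta> a \<subseteq> Gtilde D U gs G \<pi> \<omega> m (2 * \<beta> + C / (real (tau m) - 1)) a"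
proof
  fix g assume g: "g \<in> Ghat G \<pi> \<omega> m \<beta> a"
  then have "g \<in> G" unfolding Ghat_def by simp
  have N: "0 < real (tau m) - 1" using tau_gt_1[OF assms(1)] by simp
  have "{1..tau m - 1} = {1..<tau m}" using tau_ge_1[of m] by auto
  then have "(\<Sum>t\<in>{1..tau m - 1}. EMt D U gs \<pi> \<omega> t g a) \<le> 2 * (\<beta> * (real (tau m) - 1)) + C"
    using event[OF \<open>g \<in> G\<close>] sum_Mt_le_if_in_Ghat[OF assms(1-3) g] by simp
  then have "(\<Sum>t\<in>{1..tau m - 1}. EMt D U gs \<pi> \<omega> t g a) / (real (tau m) - 1)
      \<le> (2 * (\<beta> * (real (tau m) - 1)) + C) / (real (tau m) - 1)"
    using N by (intro divide_right_mono) auto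
  also have "\<dots> = 2 * \<beta> + C / (real (tau m) - 1)"
    using N by (simp add: add_divide_distrib)
  finally have "(\<Sum>t\<in>{1..tau m - 1}. EMt D U gs \<pi> \<omega> t g a) / (real (tau m) - 1)
      \<le> 2 * \<beta> + C / (real (tau m) - 1)" .
  then show "g \<in> Gtilde D U gs G \<pi> \<omega> m (2 * \<beta> + C / (real (tau m) - 1)) a"
    using \<open>g \<in> G\<close> unfolding Gtilde_def by simp
qed

lemma Ghat_subset_Ghat:
  assumes "2 \<le> k" "k \<le> m" "m \<le> M" "a \<in> {1..K}"
  shows "Ghat G \<pi> \<omega> m \<beta> a
    \<subseteq> Ghat G \<pi> \<omega> k ((real (tau m) - 1) / (real (tau k) - 1) * \<beta> + C / (real (tau k) - 1)) a"
proof
  fix g assume g: "g \<in> Ghat G \<pi> \<omega> m \<beta> a"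
  then have "g \<in> G" unfolding Ghat_def by simp
  obtain g0 where g0: "g0 \<in> G" "(INF g\<in>G. Rhat \<pi> \<omega> k g a) = Rhat \<pi> \<omega> k g0 a"
    using Rhat_minimizer[of k a] assms by auto
  define S where "S l h = (\<Sum>s\<in>{1..<tau l}. Mt gs \<pi> \<omega> s h a)" for l h
  txt \<open>Split the epoch-\<open>m\<close> sum at \<open>\<tau>\<^sub>k\<close>; both the tail and the epoch-\<open>k\<close> sum of \<open>g0\<close>
    are at least \<open>-C/2\<close>.\<close>
  have "S m g = S k g + (\<Sum>s\<in>{tau k..<tau m}. Mt gs \<pi> \<omega> s g a)"
    unfolding S_def using tau_ge_1[of k] tau_mono[OF assms(2)]
    by (simp add: sum.atLeastLessThan_concat)
  moreover have "- C / 2 \<le> (\<Sum>s\<in>{tau k..<tau m}. Mt gs \<pi> \<omega> s g a)"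
    using sum_Mt_lower_atLeastLessThan[OF \<open>g \<in> G\<close> assms(4)] tau_ge_1[of k]
      tau_mono[OF assms(2)] tau_mono[OF assms(3)]
    by simp
  moreover have "- C / 2 \<le> S k g0"
    unfolding S_def using sum_Mt_prefix_lower[OF g0(1) assms(4)] assms by simp
  moreover have "S m g \<le> \<beta> * (real (tau m) - 1)"
    unfolding S_def using sum_Mt_le_if_in_Ghat[OF _ assms(3,4) g] assms by simp
  ultimately have "S k g - S k g0 \<le> \<beta> * (real (tau m) - 1) + C" by linarith
  moreover have "Rhat \<pi> \<omega> k g a - Rhat \<pi> \<omega> k g0 a = (S k g - S k g0) / (real (tau k) - 1)"
    using Rhat_diff_gs[of \<pi> \<omega> k g a gs] Rhat_diff_gs[of \<pi> \<omega> k g0 a gs] unfolding S_def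
    by (simp add: diff_divide_distrib)
  ultimately have "Rhat \<pi> \<omega> k g a - Rhat \<pi> \<omega> k g0 a \<le> (\<beta> * (real (tau m) - 1) + C) / (real (tau k) - 1)"
    using tau_gt_1[OF assms(1)] by (simp add: divide_right_mono)
  then show "g \<in> Ghat G \<pi> \<omega> k ((real (tau m) - 1) / (real (tau k) - 1) * \<beta> + C / (real (tau k) - 1)) a"
    using \<open>g \<in> G\<close> g0(2) unfolding Ghat_def by (simp add: add_divide_distrib ac_simps)
qed

lemma gs_in_Fm:
  assumes "1 \<le> m" "m \<le> M"
  shows "gs \<in> Fm K C G \<pi> \<omega> M m"
proof (cases "m = 1")
  case True
  then show ?thesis unfolding Fm_def using gs_in by auto
next
  case False
  then have m: "2 \<le> m" using assms(1) by simp
  have N: "0 < real (tau m) - 1" using tau_gt_1[OF m] by simp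
  have "C / (2 * (real (tau m) - 1)) \<le> C / (real (tau m) - 1)"
    using N C_nonneg by (simp add: frac_le)
  also have "\<dots> \<le> betam M C m"
    unfolding betam_def using N C_nonneg mult_right_mono[of 1 "real (M - m + 1)" C]
    by (intro divide_right_mono) auto
  finally have "gs a \<in> Ghat G \<pi> \<omega> m (betam M C m) a" if "a \<in> {1..K}" for a
    using gs_in_Ghat[OF m assms(2) that] Ghat_mono by blast
  then show ?thesis unfolding Fm_def using m by auto
qed

lemma Fm_subset_Fm_pred:
  assumes "2 \<le> m" "m \<le> M"
  shows "Fm K C G \<pi> \<omega> M m \<subseteq> Fm K C G \<pi> \<omega> M (m - 1)"
proof (cases "m = 2")
  case True
  then show ?thesis unfolding Fm_def Ghat_def by auto
next
  case False
  then have "3 \<le> m" using assms(1) by simp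
  have "Ghat G \<pi> \<omega> m (betam M C m) a \<subseteq> Ghat G \<pi> \<omega> (m - 1) (betam M C (m - 1)) a"
    if "a \<in> {1..K}" for a
  proof -
    have "Ghat G \<pi> \<omega> m (betam M C m) a \<subseteq> Ghat G \<pi> \<omega> (m - 1)
        ((real (tau m) - 1) / (real (tau (m - 1)) - 1) * betam M C m + C / (real (tau (m - 1)) - 1)) a"
      by (rule Ghat_subset_Ghat) (use assms that \<open>3 \<le> m\<close> in auto)
    then show ?thesis by (simp only: betam_pred[OF \<open>3 \<le> m\<close> assms(2)])
  qed
  then show ?thesis unfolding Fm_def using \<open>3 \<le> m\<close> by (fastforce simp: Pi_iff)
qed

end

theorem mainTheorem10:
  fixes K T M :: nat and C :: real
    and X :: "'x measure" and U :: "'u measure"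
    and D :: "('x \<times> (nat \<Rightarrow> real)) measure"
    and G :: "('x \<Rightarrow> real) set" and gs :: "nat \<Rightarrow> 'x \<Rightarrow> real"
    and \<pi> :: "('x,'u) policy" and \<omega> :: "('x,'u) path"
  assumes K: "K \<ge> 1"
    and T: "T \<ge> 1"
    and M: "M \<ge> 1" "tau M \<le> T" "T < tau (Suc M)"
    and C: "C > 0"
    and D: "prob_space D" "sets D = sets (X \<Otimes>\<^sub>M (\<Pi>\<^sub>M i\<in>UNIV. borel))"
    and D_rew: "AE z in D. \<forall>a\<in>{1..K}. snd z a \<in> {0..1}"
    and U: "prob_space U"
    and G: "\<And>g. g \<in> G \<Longrightarrow> g \<in> borel_measurable X \<and> (\<forall>x\<in>space X. g x \<in> {0..1})"
    \<comment> \<open>g*_a(x) = E[r(a) | x] under D\<close>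
    and gs_meas: "\<And>a. a \<in> {1..K} \<Longrightarrow> gs a \<in> borel_measurable X"
    and gs_cond: "\<And>a A. a \<in> {1..K} \<Longrightarrow> A \<in> sets X \<Longrightarrow>
        (\<integral>z. indicator A (fst z) * snd z a \<partial>D) = (\<integral>z. indicator A (fst z) * gs a (fst z) \<partial>D)"
    and gs_in: "\<And>a. a \<in> {1..K} \<Longrightarrow> gs a \<in> G"
    and \<pi>_meas: "\<And>t h. (\<lambda>(x, u). \<pi> t h x u) \<in> measurable (X \<Otimes>\<^sub>M U) (count_space UNIV)"
    and \<pi>_range: "\<And>t h x u. \<pi> t h x u \<in> {1..K}"
    and path: "\<And>t. ctx \<omega> t \<in> space X \<and> rnd \<omega> t \<in> space U \<and> (\<forall>a\<in>{1..K}. rew \<omega> t a \<in> {0..1})"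
    and min_att: "\<And>m a. 2 \<le> m \<Longrightarrow> m \<le> M \<Longrightarrow> a \<in> {1..K} \<Longrightarrow>
        \<exists>g0\<in>G. \<forall>g\<in>G. Rhat \<pi> \<omega> m g0 a \<le> Rhat \<pi> \<omega> m g a"
    and event: "\<And>g a t1 t2. g \<in> G \<Longrightarrow> a \<in> {1..K} \<Longrightarrow> 1 \<le> t1 \<Longrightarrow> t1 \<le> t2 \<Longrightarrow> t2 \<le> T \<Longrightarrow>
        (\<Sum>t\<in>{t1..t2}. EMt D U gs \<pi> \<omega> t g a) \<le> 2 * (\<Sum>t\<in>{t1..t2}. Mt gs \<pi> \<omega> t g a) + C"
  shows "(\<forall>a\<in>{1..K}. \<forall>k m. 2 \<le> k \<and> k \<le> m \<and> m \<le> M \<longrightarrow>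
            gs a \<in> Ghat G \<pi> \<omega> m (C / (2 * (real (tau m) - 1))) a
          \<and> (\<forall>\<beta>\<ge>0. Ghat G \<pi> \<omega> m \<beta> a
                \<subseteq> Gtilde D U gs G \<pi> \<omega> m (2 * \<beta> + C / (real (tau m) - 1)) a)
          \<and> (\<forall>\<beta>\<ge>0. Ghat G \<pi> \<omega> m \<beta> a
                \<subseteq> Ghat G \<pi> \<omega> k ((real (tau m) - 1) / (real (tau k) - 1) * \<beta> + C / (real (tau k) - 1)) a))
       \<and> (\<forall>m. 1 \<le> m \<and> m \<le> M \<longrightarrow> gs \<in> Fm K C G \<pi> \<omega> M m)
       \<and> (\<forall>m. 2 \<le> m \<and> m \<le> M \<longrightarrow> Fm K C G \<pi> \<omega> M m \<subseteq> Fm K C G \<pi> \<omega> M (m - 1))"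
proof -
  have EMt_nonneg: "0 \<le> EMt D U gs \<pi> \<omega> t g a" if g: "g \<in> G" and a: "a \<in> {1..K}" for g a t
  proof (rule EMt_nonneg[where gs=gs and a=a, OF D _ U _ _ gs_meas[OF a] _ _ \<pi>_meas])
    show "AE z in D. snd z a \<in> {0..1}" using D_rew by eventually_elim (use a in auto)
    show "g \<in> borel_measurable X" "\<forall>x\<in>space X. g x \<in> {0..1}" using G[OF g] by auto
    show "\<forall>x\<in>space X. gs a x \<in> {0..1}" using G[OF gs_in[OF a]] by auto
  qed (use gs_cond a in auto)
  have tau_le_T: "tau m \<le> T" if "m \<le> M" for m using tau_mono[OF that] M(2) by linarith
  interpret confidence_sets G gs \<pi> \<omega> K M C
  proof
    fix g a t1 t2 assume g: "g \<in> G" and a: "a \<in> {1..K}" and t: "1 \<le> t1" "t1 \<le> t2" "t2 < tau M"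
    have "0 \<le> (\<Sum>t\<in>{t1..t2}. EMt D U gs \<pi> \<omega> t g a)"
      using EMt_nonneg[OF g a] by (simp add: sum_nonneg)
    then show "- C / 2 \<le> (\<Sum>t\<in>{t1..t2}. Mt gs \<pi> \<omega> t g a)"
      using event[OF g a t(1,2)] t(3) tau_le_T[of M] by simp
  qed (use C gs_in min_att in auto)
  have event_prefix: "(\<Sum>t\<in>{1..tau m - 1}. EMt D U gs \<pi> \<omega> t g a)
      \<le> 2 * (\<Sum>t\<in>{1..tau m - 1}. Mt gs \<pi> \<omega> t g a) + C"
    if "2 \<le> m" "m \<le> M" "a \<in> {1..K}" "g \<in> G" for m a g
    using event[OF that(4,3), of 1 "tau m - 1"] tau_gt_1[OF that(1)] tau_le_T[OF that(2)] by simp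
  show ?thesis
  proof (intro conjI ballI allI impI)
    fix a k m \<beta> assume a: "a \<in> {1..K}" and km: "2 \<le> k \<and> k \<le> m \<and> m \<le> M"
    then have m: "2 \<le> m" "m \<le> M" by auto
    show "gs a \<in> Ghat G \<pi> \<omega> m (C / (2 * (real (tau m) - 1))) a"
      using gs_in_Ghat[OF m a] .
    show "Ghat G \<pi> \<omega> m \<beta> a \<subseteq> Gtilde D U gs G \<pi> \<omega> m (2 * \<beta> + C / (real (tau m) - 1)) a"
      using Ghat_subset_Gtilde[OF m a event_prefix[OF m a]] .
    show "Ghat G \<pi> \<omega> m \<beta> a
        \<subseteq> Ghat G \<pi> \<omega> k ((real (tau m) - 1) / (real (tau k) - 1) * \<beta> + C / (real (tau k) - 1)) a"
      using Ghat_subset_Ghat[OF _ _ m(2) a] km by blast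
  qed (use gs_in_Fm Fm_subset_Fm_pred in auto)
qed

end
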